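(* There is no binary orthogonal array $OA(16\lambda, 11, 2, 4)$ for $\lambda = 6$, and there is none for $\lambda = 7$. That is, there is no $96 \times 11$ binary array and no $112 \times 11$ binary array of strength $4$.
   Context: For positive integers $n$, $t$, $\lambda$ with $t < n$, a binary orthogonal array $OA(2^t\lambda, n, 2, t)$ (also called a $t$-$(2,n,\lambda)$ orthogonal array) is a $\lambda 2^t \times n$ matrix with entries in $\mathbb{F}_2 = \{0,1\}$ such that, for every choice of $t$ distinct columns, every binary $t$-tuple appears as the restriction to those columns of exactly $\lambda$ rows. Rows may repeat. The number $t$ is the strength, $N = 2^t\lambda$ is the number of runs (rows), and $n$ is the number of factors (columns). *)

theory Defs
  imports Main
begin

text \<open>A binary array with N rows and n columns is a list of N rows; each row is a
function from column indices to \<open>bool\<close> (= F_2), only indices below n being relevant.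
Rows may repeat (the list records multiplicities).\<close>

definition binary_OA :: "(nat \<Rightarrow> bool) list \<Rightarrow> nat \<Rightarrow> nat \<Rightarrow> nat \<Rightarrow> bool" where
  "binary_OA A n t lam \<longleftrightarrow>
     length A = 2 ^ t * lam \<and>
     (\<forall>T. T \<subseteq> {0..<n} \<and> card T = t \<longrightarrow>
        (\<forall>u :: nat \<Rightarrow> bool.
           length (filter (\<lambda>r. \<forall>j\<in>T. r j = u j) A) = lam))"

end

theory Submission
  imports Defs "HOL-Number_Theory.Cong"
begin

text \<open>
  Let \<open>F(S) = \<Sum>\<^sub>r (-1)^|r \<inter> S|\<close> be the Fourier coefficients of an \<open>OA(16\<lambda>, 11, 2, 4)\<close>
  with \<open>N = 16\<lambda>\<close> rows \<open>r\<close>. Strength 4 gives \<open>F(\<emptyset>) = N\<close> and \<open>F(S) = 0\<close> for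
  \<open>1 \<le> |S| \<le> 4\<close>, and for \<open>\<lambda> \<le> 7\<close> Rao's argument shows that the rows are distinct, so
  Parseval gives \<open>\<Sum>\<^sub>S F(S)^2 = 2^11 N\<close>.
  Expanding \<open>(-1)^|r \<inter> S| = \<Sum>\<^sub>U\<^sub>\<subseteq>\<^sub>S (-2)^|U| [U \<subseteq> r]\<close> and using strength 4 on the terms
  with \<open>|U| \<le> 4\<close> gives \<open>F(S) \<equiv> 16\<lambda> C(|S| - 1, 4) - 32 \<sigma>(S) (mod 64)\<close>, where \<open>\<sigma>(S)\<close> counts
  the pairs (row, 5-subset of \<open>S\<close>) such that the row is all ones on the subset.
  For \<open>\<lambda> = 7\<close> this makes every \<open>F(S)\<close> with \<open>5 \<le> |S| \<le> 8\<close> an odd multiple of 16.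
  For \<open>\<lambda> = 6\<close> it makes \<open>F(S)\<close> an odd multiple of 32 whenever \<open>C(|S| - 1, 4) + \<sigma>(S)\<close> is
  odd, and double counting \<open>\<sigma>\<close> over the facets of the sets of sizes 6 to 9 shows that this
  happens for at least 187 sets of sizes 5 to 8. In both cases these coefficients alone exceed
  the Parseval budget \<open>2^11 N - N^2\<close>.
\<close>

definition subsets_of_size :: "'a set \<Rightarrow> nat \<Rightarrow> 'a set set" where
  "subsets_of_size X k = {Y. Y \<subseteq> X \<and> card Y = k}"

lemma finite_subsets_of_size [simp]: "finite X \<Longrightarrow> finite (subsets_of_size X k)"
  unfolding subsets_of_size_def by (auto intro: finite_subset[of _ "Pow X"])

lemma card_subsets_of_size: "finite X \<Longrightarrow> card (subsets_of_size X k) = card X choose k"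
  unfolding subsets_of_size_def by (rule n_subsets)

lemma sum_subsets_card_le:
  assumes "finite X"
  shows "(\<Sum>S | S \<subseteq> X \<and> card S \<le> m. f S) = (\<Sum>k\<le>m. \<Sum>S\<in>subsets_of_size X k. f S)"
proof -
  have "{S. S \<subseteq> X \<and> card S \<le> m} = (\<Union>k\<le>m. subsets_of_size X k)"
    by (auto simp: subsets_of_size_def)
  then show ?thesis
    by (simp only:) (rule sum.UNION_disjoint, simp_all add: assms, auto simp: subsets_of_size_def)
qed

lemma card_supersets_of_size:
  assumes X: "finite X" and T: "T \<subseteq> X" "card T = j" and "j \<le> k"
  shows "card {Y \<in> subsets_of_size X k. T \<subseteq> Y} = (card X - j) choose (k - j)"
proof -
  have "finite T" using X T finite_subset by blast
  have "bij_betw (\<lambda>Y. Y - T) {Y \<in> subsets_of_size X k. T \<subseteq> Y} (subsets_of_size (X - T) (k - j))"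
  proof (rule bij_betw_byWitness[where f' = "\<lambda>V. V \<union> T"])
    show "(\<lambda>V. V \<union> T) ` subsets_of_size (X - T) (k - j) \<subseteq> {Y \<in> subsets_of_size X k. T \<subseteq> Y}"
    proof
      fix Y assume "Y \<in> (\<lambda>V. V \<union> T) ` subsets_of_size (X - T) (k - j)"
      then obtain V where V: "V \<subseteq> X - T" "card V = k - j" "Y = V \<union> T"
        by (auto simp: subsets_of_size_def)
      moreover have "finite V" using V(1) X finite_subset by blast
      moreover have "V \<inter> T = {}" using V(1) by blast
      ultimately show "Y \<in> {Y \<in> subsets_of_size X k. T \<subseteq> Y}"
        using T \<open>finite T\<close> \<open>j \<le> k\<close> by (auto simp: subsets_of_size_def card_Un_disjoint)
    qed
  qed (use T \<open>finite T\<close> in \<open>auto simp: subsets_of_size_def card_Diff_subset\<close>)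
  then have "card {Y \<in> subsets_of_size X k. T \<subseteq> Y} = card (subsets_of_size (X - T) (k - j))"
    by (rule bij_betw_same_card)
  also have "\<dots> = (card X - j) choose (k - j)"
    using X T \<open>finite T\<close> by (simp add: card_subsets_of_size card_Diff_subset)
  finally show ?thesis .
qed

lemma sum_subsets_of_size_nested:
  fixes f :: "'a set \<Rightarrow> 'b::comm_semiring_1"
  assumes X: "finite X" and "j \<le> k"
  shows "(\<Sum>Y\<in>subsets_of_size X k. \<Sum>T\<in>subsets_of_size Y j. f T)
       = of_nat ((card X - j) choose (k - j)) * (\<Sum>T\<in>subsets_of_size X j. f T)"
proof -
  have "(\<Sum>Y\<in>subsets_of_size X k. \<Sum>T\<in>subsets_of_size Y j. f T)
      = (\<Sum>Y\<in>subsets_of_size X k. \<Sum>T\<in>subsets_of_size X j. of_bool (T \<subseteq> Y) * f T)"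
  proof (rule sum.cong[OF refl])
    fix Y assume "Y \<in> subsets_of_size X k"
    then have "subsets_of_size Y j = subsets_of_size X j \<inter> {T. T \<subseteq> Y}"
      by (auto simp: subsets_of_size_def)
    then show "(\<Sum>T\<in>subsets_of_size Y j. f T) = (\<Sum>T\<in>subsets_of_size X j. of_bool (T \<subseteq> Y) * f T)"
      using X by simp
  qed
  also have "\<dots> = (\<Sum>T\<in>subsets_of_size X j. of_nat (card {Y \<in> subsets_of_size X k. T \<subseteq> Y}) * f T)"
    using X by (subst sum.swap) (simp add: sum_distrib_right[symmetric] Int_def conj_commute)
  also have "\<dots> = (\<Sum>T\<in>subsets_of_size X j. of_nat ((card X - j) choose (k - j)) * f T)"
  proof (rule sum.cong[OF refl])
    fix T assume "T \<in> subsets_of_size X j"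
    then have "card {Y \<in> subsets_of_size X k. T \<subseteq> Y} = (card X - j) choose (k - j)"
      using X \<open>j \<le> k\<close> by (intro card_supersets_of_size) (auto simp: subsets_of_size_def)
    then show "of_nat (card {Y \<in> subsets_of_size X k. T \<subseteq> Y}) * f T
             = of_nat ((card X - j) choose (k - j)) * f T" by simp
  qed
  finally show ?thesis by (simp add: sum_distrib_left)
qed

lemma subsets_of_size_0: "finite X \<Longrightarrow> subsets_of_size X 0 = {{}}"
  by (auto simp: subsets_of_size_def card_eq_0_iff dest: rev_finite_subset)

lemma sum_alternating_choose_atMost:
  assumes "0 < s"
  shows "(\<Sum>k\<le>t. (-1) ^ k * of_nat (s choose k)) = ((-1) ^ t * of_nat ((s - 1) choose t) :: 'a::comm_ring_1)"
proof (induction t)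
  case (Suc t)
  obtain m where "s = Suc m" using assms gr0_implies_Suc by blast
  then show ?case using Suc by (simp add: algebra_simps)
qed simp

section \<open>Characters and Fourier coefficients\<close>

text \<open>\<open>chi r S = (-1)^|r \<inter> S|\<close>, reading the row \<open>r\<close> as the set of its true columns.\<close>

definition chi :: "(nat \<Rightarrow> bool) \<Rightarrow> nat set \<Rightarrow> int" where
  "chi r S = (\<Prod>j\<in>S. if r j then -1 else 1)"

lemma chi_empty [simp]: "chi r {} = 1"
  by (simp add: chi_def)

lemma chi_mult_self: "chi r S * chi r S = 1"
  unfolding chi_def prod.distrib[symmetric] by (rule prod.neutral) simp

lemma chi_cong: "(\<And>j. j \<in> S \<Longrightarrow> r j = r' j) \<Longrightarrow> chi r S = chi r' S"
  unfolding chi_def by (rule prod.cong) auto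

lemma chi_mult_chi: "chi r S * chi r' S = chi (\<lambda>j. r j \<noteq> r' j) S"
  unfolding chi_def prod.distrib[symmetric] by (rule prod.cong) auto

lemma chi_mult_sym_diff:
  assumes "finite S" "finite T"
  shows "chi r S * chi r T = chi r (sym_diff S T)"
proof -
  have "chi r S * chi r T = chi r (S - T) * chi r (T - S) * (chi r (S \<inter> T) * chi r (S \<inter> T))"
  proof -
    have "S - S \<inter> T = S - T" "T - S \<inter> T = T - S" by auto
    then show ?thesis
      unfolding chi_def using assms
      by (simp add: prod.subset_diff[of "S \<inter> T" S] prod.subset_diff[of "S \<inter> T" T] Int_commute ac_simps)
  qed
  also have "\<dots> = chi r (S - T) * chi r (T - S)"
    by (simp add: chi_mult_self)
  also have "\<dots> = chi r (sym_diff S T)"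
    unfolding chi_def by (subst prod.union_disjoint) (use assms in auto)
  finally show ?thesis .
qed

lemma sum_chi_Pow:
  assumes "finite I"
  shows "(\<Sum>S\<in>Pow I. chi r S) = 2 ^ card I * of_bool (\<forall>j\<in>I. \<not> r j)"
proof -
  have "(\<Sum>S\<in>Pow I. chi r S) = (\<Prod>j\<in>I. (if r j then -1 else 1) + 1)"
    unfolding chi_def by (subst prod_add[OF assms]) simp
  also have "\<dots> = (\<Prod>j\<in>I. if r j then 0 else 2)"
    by (rule prod.cong) auto
  finally show ?thesis using assms by auto
qed

lemma sum_chi_mult_chi:
  "(\<Sum>S\<in>Pow {0..<n}. chi r S * chi r' S) = 2 ^ n * of_bool (\<forall>j\<in>{0..<n}. r' j = r j)"
  unfolding chi_mult_chi by (subst sum_chi_Pow) auto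

lemma prod_mult_of_bool:
  "finite U \<Longrightarrow> (\<Prod>j\<in>U. c * of_bool (P j)) = c ^ card U * (of_bool (\<forall>j\<in>U. P j) :: 'a::comm_semiring_1)"
  by (induction U rule: finite_induct) auto

text \<open>Multiply out \<open>chi r S = (\<Prod>j\<in>S. 1 - 2 [r j])\<close>.\<close>

lemma chi_eq_sum_Pow:
  assumes "finite S"
  shows "chi r S = (\<Sum>U\<in>Pow S. (-2) ^ card U * of_bool (\<forall>j\<in>U. r j))"
proof -
  have "chi r S = (\<Prod>j\<in>S. 1 - 2 * of_bool (r j))"
    unfolding chi_def by (rule prod.cong) auto
  also have "\<dots> = (\<Sum>U\<in>Pow S. (-1) ^ card U * (\<Prod>j\<in>U. 2 * of_bool (r j)))"
    using prod_diff_conv_sum[OF assms, of "\<lambda>_. 1" "\<lambda>j. 2 * of_bool (r j)"] by simp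
  also have "\<dots> = (\<Sum>U\<in>Pow S. (-2) ^ card U * of_bool (\<forall>j\<in>U. r j))"
  proof (intro sum.cong refl)
    fix U assume "U \<in> Pow S"
    then have "finite U" using assms by (meson PowD finite_subset)
    then show "(-1) ^ card U * (\<Prod>j\<in>U. 2 * of_bool (r j)) = (-2) ^ card U * (of_bool (\<forall>j\<in>U. r j) :: int)"
      unfolding prod_mult_of_bool[OF \<open>finite U\<close>] power_minus[of 2] by (simp only: mult.assoc)
  qed
  finally show ?thesis .
qed

definition fourier :: "(nat \<Rightarrow> bool) list \<Rightarrow> nat set \<Rightarrow> int" where
  "fourier A S = (\<Sum>r\<leftarrow>A. chi r S)"

definition agree_count :: "(nat \<Rightarrow> bool) list \<Rightarrow> nat set \<Rightarrow> (nat \<Rightarrow> bool) \<Rightarrow> nat" where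
  "agree_count A U u = length (filter (\<lambda>r. \<forall>j\<in>U. r j = u j) A)"

lemma sum_list_map_sum_swap: "(\<Sum>r\<leftarrow>A. \<Sum>x\<in>X. f r x) = (\<Sum>x\<in>X. \<Sum>r\<leftarrow>A. f r x)"
  by (induction A) (simp_all add: sum.distrib)

lemma sum_list_map_of_bool: "(\<Sum>r\<leftarrow>A. of_bool (P r)) = of_nat (length (filter P A))"
  by (induction A) simp_all

lemma fourier_empty [simp]: "fourier A {} = int (length A)"
  by (simp add: fourier_def sum_list_triv)

lemma fourier_eq_sum_agree_count:
  assumes "finite S"
  shows "fourier A S = (\<Sum>U\<in>Pow S. (-2) ^ card U * int (agree_count A U (\<lambda>_. True)))"
  unfolding fourier_def chi_eq_sum_Pow[OF assms] sum_list_map_sum_swap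
  by (simp add: sum_list_const_mult sum_list_map_of_bool agree_count_def)

lemma sum_fourier_squared:
  "(\<Sum>S\<in>Pow {0..<n}. (fourier A S)\<^sup>2) = 2 ^ n * (\<Sum>r\<leftarrow>A. int (agree_count A {0..<n} r))"
proof -
  have "(\<Sum>S\<in>Pow {0..<n}. (fourier A S)\<^sup>2) = (\<Sum>S\<in>Pow {0..<n}. \<Sum>r\<leftarrow>A. \<Sum>r'\<leftarrow>A. chi r S * chi r' S)"
    by (simp add: fourier_def power2_eq_square sum_list_const_mult sum_list_mult_const)
  also have "\<dots> = (\<Sum>r\<leftarrow>A. \<Sum>r'\<leftarrow>A. \<Sum>S\<in>Pow {0..<n}. chi r S * chi r' S)"
    by (simp add: sum_list_map_sum_swap)
  also have "\<dots> = (\<Sum>r\<leftarrow>A. \<Sum>r'\<leftarrow>A. 2 ^ n * of_bool (\<forall>j\<in>{0..<n}. r' j = r j))"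
    by (simp add: sum_chi_mult_chi)
  also have "\<dots> = (\<Sum>r\<leftarrow>A. 2 ^ n * int (agree_count A {0..<n} r))"
    by (simp only: sum_list_const_mult sum_list_map_of_bool agree_count_def)
  finally show ?thesis by (simp add: sum_list_const_mult)
qed

section \<open>Orthogonal arrays\<close>

lemma agree_count_insert:
  assumes "j \<notin> U"
  shows "agree_count A U u = agree_count A (insert j U) (u(j := True)) + agree_count A (insert j U) (u(j := False))"
proof -
  let ?P = "\<lambda>r. \<forall>k\<in>U. r k = u k"
  have "(\<lambda>r. \<forall>k\<in>insert j U. r k = (u(j := b)) k) = (\<lambda>r. ?P r \<and> r j = b)" for b
    using assms by auto
  then have "agree_count A (insert j U) (u(j := b)) = length (filter (\<lambda>r. r j = b) (filter ?P A))" for b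
    by (simp add: agree_count_def)
  moreover have "agree_count A U u = length (filter ?P A)"
    by (simp add: agree_count_def)
  ultimately show ?thesis
    using sum_length_filter_compl[of "\<lambda>r. r j" "filter ?P A"] by simp
qed

lemma binary_OA_agree_count:
  assumes OA: "binary_OA A n t lam" and "t \<le> n" and "U \<subseteq> {0..<n}" "card U \<le> t"
  shows "2 ^ card U * agree_count A U u = 2 ^ t * lam"
  using assms(3,4)
proof (induction "t - card U" arbitrary: U u)
  case 0
  then have "card U = t" by simp
  with 0 OA show ?case unfolding binary_OA_def agree_count_def by auto
next
  case (Suc d)
  have "finite U" using Suc.prems(1) by (meson finite_atLeastLessThan finite_subset)
  have "card U < card {0..<n}" using Suc.hyps(2) \<open>t \<le> n\<close> by simp
  then have "\<not> {0..<n} \<subseteq> U" using card_mono[OF \<open>finite U\<close>] by (meson leD)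
  then obtain j where "j \<in> {0..<n}" "j \<notin> U" by blast
  then have j: "j < n" "j \<notin> U" by simp_all
  have U': "d = t - card (insert j U)" "insert j U \<subseteq> {0..<n}" "card (insert j U) \<le> t"
    using Suc.hyps(2) Suc.prems(1) j \<open>finite U\<close> by auto
  have half: "2 * (2 ^ card U * agree_count A (insert j U) (u(j := b))) = 2 ^ t * lam" for b
    using Suc.hyps(1)[OF U'] j(2) \<open>finite U\<close> by (simp add: mult.assoc)
  show ?case
    using half[of True] half[of False] unfolding agree_count_insert[OF j(2), of A u] distrib_left
    by linarith
qed

lemma fourier_binary_OA_eq:
  assumes OA: "binary_OA A n t lam" and "t \<le> n" and S: "S \<subseteq> {0..<n}" "S \<noteq> {}"
  shows "fourier A S = (-2) ^ t * int lam * int ((card S - 1) choose t)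
           + (\<Sum>U | U \<subseteq> S \<and> t < card U. (-2) ^ card U * int (agree_count A U (\<lambda>_. True)))"
proof -
  have "finite S" using S(1) by (rule finite_subset) simp
  have "0 < card S" using S \<open>finite S\<close> by (simp add: card_gt_0_iff)
  have "Pow S = {U. U \<subseteq> S \<and> card U \<le> t} \<union> {U. U \<subseteq> S \<and> t < card U}" by auto
  then have "fourier A S = (\<Sum>U | U \<subseteq> S \<and> card U \<le> t. (-2) ^ card U * int (agree_count A U (\<lambda>_. True)))
           + (\<Sum>U | U \<subseteq> S \<and> t < card U. (-2) ^ card U * int (agree_count A U (\<lambda>_. True)))"
    using \<open>finite S\<close> unfolding fourier_eq_sum_agree_count[OF \<open>finite S\<close>]
    by (simp add: sum.union_disjoint[symmetric] disjoint_iff not_le)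
  also have "(\<Sum>U | U \<subseteq> S \<and> card U \<le> t. (-2) ^ card U * int (agree_count A U (\<lambda>_. True)))
           = (\<Sum>U | U \<subseteq> S \<and> card U \<le> t. (-1) ^ card U * (2 ^ t * int lam))"
  proof (rule sum.cong[OF refl])
    fix U assume "U \<in> {U. U \<subseteq> S \<and> card U \<le> t}"
    then have "2 ^ card U * agree_count A U (\<lambda>_. True) = 2 ^ t * lam"
      using binary_OA_agree_count[OF OA \<open>t \<le> n\<close>] S(1) by auto
    then show "(-2) ^ card U * int (agree_count A U (\<lambda>_. True)) = (-1) ^ card U * (2 ^ t * int lam)"
      unfolding power_minus[of 2] mult.assoc by (metis of_nat_mult of_nat_numeral of_nat_power)
  qed
  also have "\<dots> = (\<Sum>k\<le>t. (-1) ^ k * int (card S choose k)) * (2 ^ t * int lam)"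
    unfolding sum_subsets_card_le[OF \<open>finite S\<close>] sum_distrib_right
    by (intro sum.cong refl) (simp add: n_subsets[OF \<open>finite S\<close>] subsets_of_size_def)
  also have "\<dots> = (-2) ^ t * int lam * int ((card S - 1) choose t)"
    unfolding sum_alternating_choose_atMost[OF \<open>0 < card S\<close>] power_minus[of 2] by simp
  finally show ?thesis .
qed

lemma fourier_binary_OA_low:
  assumes OA: "binary_OA A n t lam" and "t \<le> n" and S: "S \<subseteq> {0..<n}" "card S \<le> t"
  shows "fourier A S = (if S = {} then 2 ^ t * int lam else 0)"
proof (cases "S = {}")
  case True
  have "length A = 2 ^ t * lam" using OA unfolding binary_OA_def by blast
  with True show ?thesis by simp
next
  case False
  have "finite S" using S(1) by (rule finite_subset) simp
  then have "0 < card S" using False by (simp add: card_gt_0_iff)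
  then have no_low: "(card S - 1) choose t = 0" using S(2) by (simp add: binomial_eq_0)
  have "card U \<le> t" if "U \<subseteq> S" for U using card_mono[OF \<open>finite S\<close> that] S(2) by linarith
  then have no_high: "{U. U \<subseteq> S \<and> t < card U} = {}" by (metis (mono_tags) Collect_empty_eq leD)
  show ?thesis
    unfolding fourier_binary_OA_eq[OF OA \<open>t \<le> n\<close> S(1) False] no_low no_high using False by simp
qed

definition ones_sum :: "(nat \<Rightarrow> bool) list \<Rightarrow> nat \<Rightarrow> nat set \<Rightarrow> int" where
  "ones_sum A k S = (\<Sum>U\<in>subsets_of_size S k. int (agree_count A U (\<lambda>_. True)))"

lemma sum_ones_sum_facets:
  assumes "finite T" "j < card T"
  shows "(\<Sum>U\<in>subsets_of_size T (card T - 1). ones_sum A j U) = int (card T - j) * ones_sum A j T"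
proof -
  obtain d where "card T = Suc (j + d)" using less_imp_Suc_add[OF assms(2)] by blast
  then have "(card T - j) choose (card T - 1 - j) = card T - j" using binomial_Suc_n[of d] by simp
  then show ?thesis
    unfolding ones_sum_def
    using sum_subsets_of_size_nested[OF assms(1), of j "card T - 1" "\<lambda>U. int (agree_count A U (\<lambda>_. True))"]
      assms(2) by simp
qed

lemma fourier_binary_OA_cong:
  assumes OA: "binary_OA A n t lam" and "t \<le> n" and S: "S \<subseteq> {0..<n}" "S \<noteq> {}"
  shows "[fourier A S = (-2) ^ t * int lam * int ((card S - 1) choose t) + (-2) ^ (t + 1) * ones_sum A (t + 1) S]
           (mod 2 ^ (t + 2))"
proof -
  have "finite S" using S(1) by (rule finite_subset) simp
  let ?g = "\<lambda>U. (-2) ^ card U * int (agree_count A U (\<lambda>_. True))"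
  let ?H = "{U. U \<subseteq> S \<and> t + 2 \<le> card U}"
  have "finite ?H" using \<open>finite S\<close> by (rule rev_finite_subset[OF finite_Pow_iff[THEN iffD2]]) auto
  have "{U. U \<subseteq> S \<and> t < card U} = subsets_of_size S (t + 1) \<union> ?H"
    and "subsets_of_size S (t + 1) \<inter> ?H = {}"
    by (auto simp: subsets_of_size_def)
  then have "(\<Sum>U | U \<subseteq> S \<and> t < card U. ?g U) = sum ?g (subsets_of_size S (t + 1)) + sum ?g ?H"
    using sum.union_disjoint[OF finite_subsets_of_size[OF \<open>finite S\<close>] \<open>finite ?H\<close>] by simp
  moreover have "sum ?g (subsets_of_size S (t + 1)) = (-2) ^ (t + 1) * ones_sum A (t + 1) S"
    unfolding ones_sum_def sum_distrib_left by (intro sum.cong refl) (simp add: subsets_of_size_def)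
  moreover have "2 ^ (t + 2) dvd sum ?g ?H"
  proof (rule dvd_sum)
    fix U assume "U \<in> ?H"
    then have "t + 2 \<le> card U" by simp
    then obtain m where "card U = (t + 2) + m" using le_Suc_ex by blast
    then have "?g U = (-2) ^ (t + 2) * ((-2) ^ m * int (agree_count A U (\<lambda>_. True)))"
      by (simp add: power_add)
    moreover have "(2::int) ^ (t + 2) dvd (-2) ^ (t + 2)"
      unfolding power_minus[of 2] by (rule dvd_triv_right)
    ultimately show "2 ^ (t + 2) dvd ?g U" by (metis dvd_mult2)
  qed
  ultimately show ?thesis
    unfolding fourier_binary_OA_eq[OF assms] cong_iff_dvd_diff by simp
qed

lemma binary_OA_chi_orthogonal:
  assumes OA: "binary_OA A n t lam" and "t \<le> n"
    and S: "S \<subseteq> {0..<n}" and T: "T \<subseteq> {0..<n}" and "card S + card T \<le> t"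
  shows "(\<Sum>r\<leftarrow>A. chi r S * chi r T) = of_bool (S = T) * (2 ^ t * int lam)"
proof -
  have "finite S" "finite T" using S T by (auto intro: finite_subset[of _ "{0..<n}"])
  have "card (sym_diff S T) \<le> card S + card T"
    using card_Un_le[of "S - T" "T - S"] card_mono[OF \<open>finite S\<close>, of "S - T"]
      card_mono[OF \<open>finite T\<close>, of "T - S"] by auto
  moreover have "sym_diff S T \<subseteq> {0..<n}" using S T by auto
  moreover have "sym_diff S T = {} \<longleftrightarrow> S = T" by auto
  ultimately have "fourier A (sym_diff S T) = of_bool (S = T) * (2 ^ t * int lam)"
    using fourier_binary_OA_low[OF OA \<open>t \<le> n\<close>] \<open>card S + card T \<le> t\<close> by simp
  then show ?thesis
    by (simp add: fourier_def chi_mult_sym_diff[OF \<open>finite S\<close> \<open>finite T\<close>])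
qed

lemma sum_square_orthogonal_chi:
  assumes "finite L"
    and orth: "\<And>S T. S \<in> L \<Longrightarrow> T \<in> L \<Longrightarrow> (\<Sum>r\<leftarrow>A. chi r S * chi r T) = of_bool (S = T) * N"
  shows "(\<Sum>r\<leftarrow>A. (\<Sum>S\<in>L. chi x S * chi r S)\<^sup>2) = int (card L) * N"
proof -
  have "(\<Sum>r\<leftarrow>A. (\<Sum>S\<in>L. chi x S * chi r S)\<^sup>2)
      = (\<Sum>S\<in>L. \<Sum>T\<in>L. chi x S * chi x T * (\<Sum>r\<leftarrow>A. chi r S * chi r T))"
    unfolding power2_eq_square sum_product
    by (simp add: sum_list_map_sum_swap sum_list_const_mult[symmetric] algebra_simps)
  also have "\<dots> = (\<Sum>S\<in>L. N)"
  proof (intro sum.cong refl)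
    fix S assume "S \<in> L"
    have "(\<Sum>T\<in>L. chi x S * chi x T * (\<Sum>r\<leftarrow>A. chi r S * chi r T)) = (\<Sum>T\<in>L. if T = S then N else 0)"
      using orth \<open>S \<in> L\<close> chi_mult_self by (intro sum.cong refl) auto
    then show "(\<Sum>T\<in>L. chi x S * chi x T * (\<Sum>r\<leftarrow>A. chi r S * chi r T)) = N"
      using \<open>S \<in> L\<close> \<open>finite L\<close> by simp
  qed
  finally show ?thesis by simp
qed

text \<open>Rao's argument: by orthogonality, \<open>\<phi> r = (\<Sum>S\<in>L. chi x S * chi r S)\<close> has mean square
  \<open>card L\<close> over the rows, but \<open>\<phi> r = card L\<close> for every row \<open>r\<close> that agrees with \<open>x\<close>.\<close>

lemma binary_OA_multiplicity_le:
  assumes OA: "binary_OA A n t lam" and "t \<le> n"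
  shows "(\<Sum>k\<le>t div 2. n choose k) * agree_count A {0..<n} x \<le> 2 ^ t * lam"
proof -
  define L where "L = {S. S \<subseteq> {0..<n} \<and> card S \<le> t div 2}"
  define N where "N = 2 ^ t * int lam"
  have "finite L" unfolding L_def by (rule rev_finite_subset[of "Pow {0..<n}"]) auto
  have card_L: "card L = (\<Sum>k\<le>t div 2. n choose k)"
    using sum_subsets_card_le[where X = "{0..<n}" and m = "t div 2" and f = "\<lambda>_. 1::nat"]
    by (simp add: L_def card_subsets_of_size)
  have "{} \<in> L" by (simp add: L_def)
  then have "0 < card L" using \<open>finite L\<close> card_gt_0_iff by blast
  have orth: "(\<Sum>r\<leftarrow>A. chi r S * chi r T) = of_bool (S = T) * N" if "S \<in> L" "T \<in> L" for S T
  proof -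
    have "S \<subseteq> {0..<n}" "T \<subseteq> {0..<n}" "card S \<le> t div 2" "card T \<le> t div 2"
      using that by (simp_all add: L_def)
    moreover have "card S + card T \<le> t" using calculation(3,4) by presburger
    ultimately show ?thesis unfolding N_def by (intro binary_OA_chi_orthogonal[OF OA \<open>t \<le> n\<close>])
  qed
  define phi where "phi r = (\<Sum>S\<in>L. chi x S * chi r S)" for r
  have upper: "(\<Sum>r\<leftarrow>A. (phi r)\<^sup>2) = int (card L) * N"
    unfolding phi_def using \<open>finite L\<close> orth by (rule sum_square_orthogonal_chi)
  have "of_bool (\<forall>j\<in>{0..<n}. r j = x j) * (int (card L))\<^sup>2 \<le> (phi r)\<^sup>2" for r
  proof (cases "\<forall>j\<in>{0..<n}. r j = x j")
    case True
    have "chi x S * chi r S = 1" if "S \<in> L" for S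
    proof -
      have "chi r S = chi x S" using True that by (intro chi_cong) (auto simp: L_def)
      then show ?thesis by (simp add: chi_mult_self)
    qed
    then have "phi r = int (card L)" unfolding phi_def by simp
    with True show ?thesis by simp
  qed auto
  then have "(\<Sum>r\<leftarrow>A. of_bool (\<forall>j\<in>{0..<n}. r j = x j) * (int (card L))\<^sup>2) \<le> (\<Sum>r\<leftarrow>A. (phi r)\<^sup>2)"
    by (rule sum_list_mono)
  then have "int (card L) * (int (card L) * int (agree_count A {0..<n} x)) \<le> int (card L) * N"
    unfolding upper sum_list_mult_const sum_list_map_of_bool agree_count_def
    by (simp add: power2_eq_square algebra_simps)
  then have "int (card L) * int (agree_count A {0..<n} x) \<le> N"
    using \<open>0 < card L\<close> by simp
  then have "int (card L * agree_count A {0..<n} x) \<le> int (2 ^ t * lam)" by (simp add: N_def)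
  then show ?thesis unfolding card_L by (simp only: of_nat_le_iff)
qed

section \<open>Covering by odd sets\<close>

lemma card_odd_members_pos:
  assumes "finite Y" and "odd (\<Sum>y\<in>Y. v y)"
  shows "0 < card ({y. odd (v y)} \<inter> Y)"
proof -
  have "odd (card {y \<in> Y. odd (v y)})" using assms by (simp add: even_sum_iff)
  then show ?thesis by (auto simp: Int_def conj_commute intro: gr0I)
qed

lemma binomial_le_cover:
  fixes c :: "'a set \<Rightarrow> nat"
  assumes X: "finite X" and "1 \<le> k"
    and cover: "\<And>T. T \<in> subsets_of_size X k \<Longrightarrow> 1 \<le> c T + card (Q \<inter> subsets_of_size T (k - 1))"
  shows "card X choose k \<le> sum c (subsets_of_size X k) + (card X + 1 - k) * card (Q \<inter> subsets_of_size X (k - 1))"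
proof -
  have card_Q: "card (Q \<inter> subsets_of_size Y j) = (\<Sum>U\<in>subsets_of_size Y j. of_bool (U \<in> Q))"
    if "finite Y" for Y :: "'a set" and j
    using that by (simp add: Int_commute)
  have "card X choose k = (\<Sum>T\<in>subsets_of_size X k. 1)"
    using X by (simp add: card_subsets_of_size)
  also have "\<dots> \<le> (\<Sum>T\<in>subsets_of_size X k. c T + card (Q \<inter> subsets_of_size T (k - 1)))"
    by (rule sum_mono) (rule cover)
  also have "\<dots> = sum c (subsets_of_size X k)
      + (\<Sum>T\<in>subsets_of_size X k. \<Sum>U\<in>subsets_of_size T (k - 1). of_bool (U \<in> Q))"
    unfolding sum.distrib using X
    by (intro arg_cong2[where f = "(+)"] sum.cong refl card_Q) (auto simp: subsets_of_size_def intro: finite_subset)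
  also have "(\<Sum>T\<in>subsets_of_size X k. \<Sum>U\<in>subsets_of_size T (k - 1). of_bool (U \<in> Q))
      = (card X + 1 - k) * card (Q \<inter> subsets_of_size X (k - 1))"
    using sum_subsets_of_size_nested[OF X, of "k - 1" k "\<lambda>U. of_bool (U \<in> Q) :: nat"] \<open>1 \<le> k\<close>
    by (simp add: card_Q[OF X] Suc_diff_le of_nat_id)
  finally show ?thesis .
qed

lemma binomial_le_odd_cover:
  fixes v :: "'a set \<Rightarrow> int"
  assumes "finite X" "1 \<le> k"
    and "\<And>T. T \<in> subsets_of_size X k \<Longrightarrow> odd (\<Sum>U\<in>subsets_of_size T (k - 1). v U)"
  shows "card X choose k \<le> (card X + 1 - k) * card ({S. odd (v S)} \<inter> subsets_of_size X (k - 1))"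
proof -
  have "1 \<le> 0 + card ({S. odd (v S)} \<inter> subsets_of_size T (k - 1))" if "T \<in> subsets_of_size X k" for T
  proof -
    have "finite T" using that assms(1) by (auto simp: subsets_of_size_def intro: finite_subset)
    from card_odd_members_pos[OF finite_subsets_of_size[OF this] assms(3)[OF that]] show ?thesis
      by simp
  qed
  from binomial_le_cover[OF assms(1,2) this] show ?thesis by simp
qed

lemma binomial_le_odd_cover_insert:
  fixes v :: "'a set \<Rightarrow> int"
  assumes X: "finite X" and "1 \<le> k"
    and odd: "\<And>T. T \<in> subsets_of_size X k \<Longrightarrow> odd (v T + (\<Sum>U\<in>subsets_of_size T (k - 1). v U))"
  shows "card X choose k \<le> card ({S. odd (v S)} \<inter> subsets_of_size X k)
           + (card X + 1 - k) * card ({S. odd (v S)} \<inter> subsets_of_size X (k - 1))"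
proof -
  let ?Q = "{S. odd (v S)}"
  have "1 \<le> of_bool (T \<in> ?Q) + card (?Q \<inter> subsets_of_size T (k - 1))" if T: "T \<in> subsets_of_size X k" for T
  proof -
    have "finite T" using T X by (auto simp: subsets_of_size_def intro: finite_subset)
    moreover have "T \<notin> subsets_of_size T (k - 1)" using T \<open>1 \<le> k\<close> by (auto simp: subsets_of_size_def)
    ultimately have "0 < card (?Q \<inter> insert T (subsets_of_size T (k - 1)))"
      using odd[OF T] by (intro card_odd_members_pos) simp_all
    with \<open>finite T\<close> \<open>T \<notin> subsets_of_size T (k - 1)\<close> show ?thesis
      by (cases "T \<in> ?Q") (simp_all add: Int_insert_right)
  qed
  from binomial_le_cover[OF X \<open>1 \<le> k\<close> this] X show ?thesis
    by (simp add: Int_commute)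
qed

section \<open>Eleven columns and strength four\<close>

lemma power2_le_of_odd_multiple:
  fixes x d m :: int
  assumes "x = d * m" "odd m"
  shows "d\<^sup>2 \<le> x\<^sup>2"
proof -
  have "1 \<le> \<bar>m\<bar>" using assms(2) by (cases "m = 0") auto
  then have "\<bar>d\<bar> \<le> \<bar>x\<bar>" using assms(1) by (simp add: abs_mult mult_le_cancel_left1)
  then show ?thesis by (simp add: abs_le_square_iff)
qed

lemma sum_fourier_squared_OA_11_4:
  assumes OA: "binary_OA A 11 4 lam" and "lam \<le> 7"
  shows "(\<Sum>S\<in>Pow {0..<11}. (fourier A S)\<^sup>2) = 2048 * (16 * int lam)"
proof -
  have "agree_count A {0..<11} r = 1" if "r \<in> set A" for r
  proof -
    have "(\<Sum>k\<le>2. 11 choose k) = (67::nat)" by (simp add: numeral_eq_Suc)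
    then have "67 * agree_count A {0..<11} r \<le> 16 * lam"
      using binary_OA_multiplicity_le[OF OA, of r] by simp
    moreover have "0 < agree_count A {0..<11} r"
      using that by (auto simp: agree_count_def filter_empty_conv)
    ultimately show ?thesis using \<open>lam \<le> 7\<close> by linarith
  qed
  then have "(\<Sum>r\<leftarrow>A. int (agree_count A {0..<11} r)) = (\<Sum>r\<leftarrow>A. 1)"
    by (simp cong: map_cong)
  moreover have "length A = 16 * lam" using OA by (simp add: binary_OA_def)
  ultimately show ?thesis using sum_fourier_squared[where n = 11 and A = A] by (simp add: sum_list_triv)
qed

lemma fourier_levels_bound_OA_11_4:
  assumes OA: "binary_OA A 11 4 lam" and "lam \<le> 7"
  shows "(16 * int lam)\<^sup>2 + (\<Sum>k\<in>{5, 6, 7, 8}. \<Sum>S\<in>subsets_of_size {0..<11} k. (fourier A S)\<^sup>2)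
           \<le> 2048 * (16 * int lam)"
proof -
  let ?level = "\<lambda>k. \<Sum>S\<in>subsets_of_size {0..<11::nat} k. (fourier A S)\<^sup>2"
  have "Pow {0..<11} = {S. S \<subseteq> {0..<11::nat} \<and> card S \<le> 11}"
    using card_mono[of "{0..<11::nat}"] by fastforce
  then have "(\<Sum>S\<in>Pow {0..<11}. (fourier A S)\<^sup>2) = (\<Sum>k\<le>11. ?level k)"
    by (simp add: sum_subsets_card_le)
  moreover have "(\<Sum>k\<in>{0, 5, 6, 7, 8}. ?level k) \<le> (\<Sum>k\<le>11. ?level k)"
    by (rule sum_mono2) (auto intro: sum_nonneg)
  moreover have "?level 0 = (16 * int lam)\<^sup>2"
    using OA by (simp add: subsets_of_size_0 binary_OA_def)
  ultimately show ?thesis using sum_fourier_squared_OA_11_4[OF assms] by simp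
qed

lemma fourier_OA_11_4_eq:
  assumes OA: "binary_OA A 11 4 lam" and S: "S \<subseteq> {0..<11}" "S \<noteq> {}"
  obtains c where "fourier A S = 16 * int lam * int ((card S - 1) choose 4) - 32 * ones_sum A 5 S + 64 * c"
proof -
  obtain k where "(-2) ^ 4 * int lam * int ((card S - 1) choose 4) + (-2) ^ (4 + 1) * ones_sum A 5 S
      = fourier A S + 2 ^ (4 + 2) * k"
    using fourier_binary_OA_cong[OF OA _ S] unfolding cong_iff_lin by auto
  then have "fourier A S = 16 * int lam * int ((card S - 1) choose 4) - 32 * ones_sum A 5 S + 64 * (- k)"
    by simp
  then show ?thesis by (rule that)
qed

lemma choose_4_values:
  "(4::nat) choose 4 = 1" "(5::nat) choose 4 = 5" "(6::nat) choose 4 = 15" "(7::nat) choose 4 = 35"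
  by (simp_all add: numeral_eq_Suc)

lemma choose_11_values:
  "(11::nat) choose 5 = 462" "(11::nat) choose 6 = 462" "(11::nat) choose 7 = 330"
  "(11::nat) choose 8 = 165" "(11::nat) choose 9 = 55"
  by (simp_all add: numeral_eq_Suc)

lemma no_binary_OA_11_4_7: "\<not> binary_OA A 11 4 7"
proof
  assume OA: "binary_OA A 11 4 7"
  have level: "256 * int (11 choose k) \<le> (\<Sum>S\<in>subsets_of_size {0..<11} k. (fourier A S)\<^sup>2)"
    if k: "k \<in> {5, 6, 7, 8}" for k
  proof -
    have "256 \<le> (fourier A S)\<^sup>2" if S: "S \<in> subsets_of_size {0..<11} k" for S
    proof -
      have S': "S \<subseteq> {0..<11}" "card S = k" using S by (simp_all add: subsets_of_size_def)
      then have "S \<noteq> {}" using k by auto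
      obtain c where F: "fourier A S = 16 * int 7 * int ((card S - 1) choose 4) - 32 * ones_sum A 5 S + 64 * c"
        by (rule fourier_OA_11_4_eq[OF OA S'(1) \<open>S \<noteq> {}\<close>])
      define m where "m = 7 * int ((k - 1) choose 4) - 2 * ones_sum A 5 S + 4 * c"
      have "fourier A S = 16 * m" unfolding F m_def S'(2) by (simp add: algebra_simps)
      moreover have "odd ((k - 1) choose 4)" using k by (auto simp: choose_4_values)
      then have "odd m" unfolding m_def by simp
      ultimately have "16\<^sup>2 \<le> (fourier A S)\<^sup>2" by (rule power2_le_of_odd_multiple)
      then show ?thesis by simp
    qed
    then have "(\<Sum>S\<in>subsets_of_size {0..<11::nat} k. 256) \<le> (\<Sum>S\<in>subsets_of_size {0..<11} k. (fourier A S)\<^sup>2)"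
      by (rule sum_mono)
    then show ?thesis by (simp add: card_subsets_of_size)
  qed
  have "(\<Sum>k\<in>{5, 6, 7, 8}. 256 * int (11 choose k))
      \<le> (\<Sum>k\<in>{5, 6, 7, 8}. \<Sum>S\<in>subsets_of_size {0..<11} k. (fourier A S)\<^sup>2)"
    by (rule sum_mono) (rule level)
  then show False
    using fourier_levels_bound_OA_11_4[OF OA] by (simp add: choose_11_values)
qed

lemma odd_sets_count_11:
  fixes sigma :: "nat set \<Rightarrow> int"
  assumes sigma: "\<And>T. T \<subseteq> {0..<11} \<Longrightarrow> 6 \<le> card T \<Longrightarrow>
      (\<Sum>U\<in>subsets_of_size T (card T - 1). sigma U) = int (card T - 5) * sigma T"
  shows "187 \<le> (\<Sum>k\<in>{5, 6, 7, 8}.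
                  card ({S. odd (int ((card S - 1) choose 4) + sigma S)} \<inter> subsets_of_size {0..<11::nat} k))"
proof -
  define v where "v S = int ((card S - 1) choose 4) + sigma S" for S :: "nat set"
  define W where "W k = card ({S. odd (v S)} \<inter> subsets_of_size {0..<11::nat} k)" for k
  have sum_v: "(\<Sum>U\<in>subsets_of_size T (k - 1). v U) = int k * int ((k - 2) choose 4) + int (k - 5) * sigma T"
    if T: "T \<in> subsets_of_size {0..<11} k" and "6 \<le> k" for T k
  proof -
    have "T \<subseteq> {0..<11}" "card T = k" "finite T"
      using T by (auto simp: subsets_of_size_def intro: finite_subset)
    have "card (subsets_of_size T (k - 1)) = k"
      using \<open>6 \<le> k\<close> binomial_Suc_n[of "k - 1"] by (simp add: card_subsets_of_size \<open>finite T\<close> \<open>card T = k\<close>)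
    then have "(\<Sum>U\<in>subsets_of_size T (k - 1). int ((card U - 1) choose 4)) = int k * int ((k - 2) choose 4)"
      by (simp add: subsets_of_size_def numeral_2_eq_2)
    then show ?thesis
      using sigma[OF \<open>T \<subseteq> {0..<11}\<close>] \<open>card T = k\<close> \<open>6 \<le> k\<close> by (simp add: v_def sum.distrib)
  qed
  have v_card: "v T = int ((k - 1) choose 4) + sigma T" if "T \<in> subsets_of_size {0..<11} k" for T k
    using that by (simp add: v_def subsets_of_size_def)
  have insert_cover: "11 choose k \<le> W k + (12 - k) * W (k - 1)" if k: "k \<in> {6, 8}" for k
  proof -
    have "odd (v T + (\<Sum>U\<in>subsets_of_size T (k - 1). v U))" if "T \<in> subsets_of_size {0..<11} k" for T
      using sum_v[OF that] v_card[OF that] k by (cases "k = 6") (simp_all add: choose_4_values)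
    moreover have "1 \<le> k" using k by auto
    ultimately show ?thesis
      using binomial_le_odd_cover_insert[of "{0..<11::nat}" k v] by (simp add: W_def)
  qed
  have plain_cover: "11 choose k \<le> (12 - k) * W (k - 1)" if k: "k \<in> {7, 9}" for k
  proof -
    have "odd (\<Sum>U\<in>subsets_of_size T (k - 1). v U)" if "T \<in> subsets_of_size {0..<11} k" for T
      using sum_v[OF that] k by (cases "k = 7") (simp_all add: choose_4_values)
    moreover have "1 \<le> k" using k by auto
    ultimately show ?thesis
      using binomial_le_odd_cover[of "{0..<11::nat}" k v] by (simp add: W_def)
  qed
  \<comment> \<open>\<open>W 5 + W 6 \<ge> 77 + 5/6 W 6 \<ge> 132\<close> and \<open>W 7 + W 8 \<ge> 165/4 + 3/4 W 8 \<ge> 55\<close>\<close>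
  show ?thesis
    using insert_cover[of 6] insert_cover[of 8] plain_cover[of 7] plain_cover[of 9]
    unfolding v_def[symmetric] W_def[symmetric] by (simp add: choose_11_values)
qed

lemma no_binary_OA_11_4_6: "\<not> binary_OA A 11 4 6"
proof
  assume OA: "binary_OA A 11 4 6"
  define Q where "Q = {S. odd (int ((card S - 1) choose 4) + ones_sum A 5 S)}"
  have odd_set_bound: "1024 \<le> (fourier A S)\<^sup>2" if S: "S \<in> subsets_of_size {0..<11} k" "5 \<le> k" "S \<in> Q" for S k
  proof -
    have S': "S \<subseteq> {0..<11}" "card S = k" using S by (simp_all add: subsets_of_size_def)
    then have "S \<noteq> {}" using S(2) by auto
    obtain c where F: "fourier A S = 16 * int 6 * int ((card S - 1) choose 4) - 32 * ones_sum A 5 S + 64 * c"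
      by (rule fourier_OA_11_4_eq[OF OA S'(1) \<open>S \<noteq> {}\<close>])
    define m where "m = 3 * int ((card S - 1) choose 4) - ones_sum A 5 S + 2 * c"
    have "fourier A S = 32 * m" unfolding F m_def by (simp add: algebra_simps)
    moreover have "odd m" using S(3) unfolding m_def Q_def by simp
    ultimately have "32\<^sup>2 \<le> (fourier A S)\<^sup>2" by (rule power2_le_of_odd_multiple)
    then show ?thesis by simp
  qed
  have level: "1024 * int (card (Q \<inter> subsets_of_size {0..<11} k))
      \<le> (\<Sum>S\<in>subsets_of_size {0..<11} k. (fourier A S)\<^sup>2)" if "5 \<le> k" for k
  proof -
    have "(\<Sum>S\<in>subsets_of_size {0..<11::nat} k. 1024 * of_bool (S \<in> Q))
        \<le> (\<Sum>S\<in>subsets_of_size {0..<11} k. (fourier A S)\<^sup>2)"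
      using that odd_set_bound by (intro sum_mono) auto
    then show ?thesis by (simp add: sum_distrib_left[symmetric] Int_commute)
  qed
  have "187 \<le> (\<Sum>k\<in>{5, 6, 7, 8}. card (Q \<inter> subsets_of_size {0..<11} k))"
    unfolding Q_def by (rule odd_sets_count_11, rule sum_ones_sum_facets) (auto intro: finite_subset)
  then have "1024 * 187 \<le> (\<Sum>k\<in>{5, 6, 7, 8}. 1024 * int (card (Q \<inter> subsets_of_size {0..<11} k)))"
    by simp
  also have "\<dots> \<le> (\<Sum>k\<in>{5, 6, 7, 8}. \<Sum>S\<in>subsets_of_size {0..<11} k. (fourier A S)\<^sup>2)"
    by (rule sum_mono) (rule level, auto)
  finally show False using fourier_levels_bound_OA_11_4[OF OA] by simp
qed

theorem theorem1:
  shows "\<not> (\<exists>A. binary_OA A 11 4 6) \<and> \<not> (\<exists>A. binary_OA A 11 4 7)"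
  using no_binary_OA_11_4_6 no_binary_OA_11_4_7 by blast

end
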